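(* Let $G$ be a cofinite group and let $X=\{*\}\sqcup E(X)$ be a cofinite graph with a single vertex $*$. Let $\alpha\colon X\to G$ be a uniformly continuous map with $\alpha( * )=1_G$ and $\alpha(\overline e)=\alpha(e)^{-1}$ for all $e\in E(X)$, and let $\Gamma=\Gamma(G,X)$ be the cofinite Cayley graph. Then $\alpha$ generates $G$ topologically, i.e. $\overline{\langle\alpha(X)\rangle}=G$, if and only if $\Gamma$ is cofinitely connected.
   Context: A graph $\Gamma$ is a set $\Gamma=V(\Gamma)\sqcup E(\Gamma)$ with maps $s,t\colon E(\Gamma)\to V(\Gamma)$ and a fixed-point-free involution $e\mapsto\overline e$ of $E(\Gamma)$ with $s(\overline e)=t(e)$, $t(\overline e)=s(e)$. An equivalence relation $R$ on a graph is compatible if $R\subseteq (V\times V)\cup(E\times E)$, $(e,e')\in R$ implies $(s(e),s(e')),(t(e),t(e')),(\overline e,\overline{e'})\in R$, and $(e,\overline e)\notin R$ for all edges $e$; then $\Gamma/R$ is a graph. A cofinite entourage is an entourage that is an equivalence relation with finitely many classes. A cofinite graph is a graph with a Hausdorff uniformity in which the compatible cofinite entourages form a fundamental system. A cofinite group is a group with a Hausdorff uniformity having a fundamental system of cofinite congruences (cofinite entourages $R$ with $(a,b),(c,d)\in R\Rightarrow(ac,bd)\in R$). The cofinite Cayley graph $\Gamma(G,X)$ has $V=G\times\{*\}$, $E=G\times E(X)$, $s(g,e)=(g,* )$, $t(g,e)=(g\alpha(e),* )$, $\overline{(g,e)}=(g\alpha(e),\overline e)$, and carries the product uniformity of $G\times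 X$ (this makes it a cofinite graph). A cofinite graph is cofinitely connected if $\Gamma/R$ is path connected (any two vertices joined by a finite edge path $e_1\cdots e_n$ with $t(e_i)=s(e_{i+1})$) for every compatible cofinite entourage $R$. *)

theory Defs
  imports "HOL-Algebra.Generated_Groups"
begin

definition is_uniformity :: "'a set \<Rightarrow> ('a \<times> 'a) set set \<Rightarrow> bool" where
  "is_uniformity S U \<longleftrightarrow>
     S \<times> S \<in> U \<and>
     (\<forall>D\<in>U. Id_on S \<subseteq> D \<and> D \<subseteq> S \<times> S) \<and>
     (\<forall>D\<in>U. \<forall>D'. D \<subseteq> D' \<and> D' \<subseteq> S \<times> S \<longrightarrow> D' \<in> U) \<and>
     (\<forall>D\<in>U. \<forall>D'\<in>U. D \<inter> D' \<in> U) \<and>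
     (\<forall>D\<in>U. D\<inverse> \<in> U) \<and>
     (\<forall>D\<in>U. \<exists>D'\<in>U. D' O D' \<subseteq> D)"

definition hausdorff_uniformity :: "'a set \<Rightarrow> ('a \<times> 'a) set set \<Rightarrow> bool" where
  "hausdorff_uniformity S U \<longleftrightarrow> is_uniformity S U \<and> \<Inter>U = Id_on S"

definition cofinite_entourage :: "'a set \<Rightarrow> ('a \<times> 'a) set set \<Rightarrow> ('a \<times> 'a) set \<Rightarrow> bool" where
  "cofinite_entourage S U R \<longleftrightarrow> R \<in> U \<and> equiv S R \<and> finite (S // R)"

definition unif_continuous ::
  "('a \<times> 'a) set set \<Rightarrow> ('b \<times> 'b) set set \<Rightarrow> ('a \<Rightarrow> 'b) \<Rightarrow> bool" where
  "unif_continuous U1 U2 f \<longleftrightarrow> (\<forall>D\<in>U2. \<exists>D'\<in>U1. \<forall>(x, y)\<in>D'. (f x, f y) \<in> D)"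

definition unif_closure :: "'a set \<Rightarrow> ('a \<times> 'a) set set \<Rightarrow> 'a set \<Rightarrow> 'a set" where
  "unif_closure S U A = {x \<in> S. \<forall>D\<in>U. \<exists>a\<in>A. (x, a) \<in> D}"

definition prod_unif ::
  "'a set \<Rightarrow> ('a \<times> 'a) set set \<Rightarrow> 'b set \<Rightarrow> ('b \<times> 'b) set set \<Rightarrow> (('a \<times> 'b) \<times> ('a \<times> 'b)) set set" where
  "prod_unif S1 U1 S2 U2 =
     {D. D \<subseteq> (S1 \<times> S2) \<times> (S1 \<times> S2) \<and>
         (\<exists>D1\<in>U1. \<exists>D2\<in>U2. {((a, b), (a', b')). (a, a') \<in> D1 \<and> (b, b') \<in> D2} \<subseteq> D)}"

record 'a graph =
  verts :: "'a set"
  edges :: "'a set"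
  src :: "'a \<Rightarrow> 'a"
  tgt :: "'a \<Rightarrow> 'a"
  rev_edge :: "'a \<Rightarrow> 'a"

abbreviation gcarrier :: "'a graph \<Rightarrow> 'a set" where
  "gcarrier \<Gamma> \<equiv> verts \<Gamma> \<union> edges \<Gamma>"

definition is_graph :: "'a graph \<Rightarrow> bool" where
  "is_graph \<Gamma> \<longleftrightarrow> verts \<Gamma> \<inter> edges \<Gamma> = {} \<and>
     (\<forall>e\<in>edges \<Gamma>. src \<Gamma> e \<in> verts \<Gamma> \<and> tgt \<Gamma> e \<in> verts \<Gamma> \<and> rev_edge \<Gamma> e \<in> edges \<Gamma> \<and>
        rev_edge \<Gamma> (rev_edge \<Gamma> e) = e \<and> rev_edge \<Gamma> e \<noteq> e \<and>
        src \<Gamma> (rev_edge \<Gamma> e) = tgt \<Gamma> e \<and> tgt \<Gamma> (rev_edge \<Gamma> e) = src \<Gamma> e)"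

definition compatible :: "'a graph \<Rightarrow> ('a \<times> 'a) set \<Rightarrow> bool" where
  "compatible \<Gamma> R \<longleftrightarrow> equiv (gcarrier \<Gamma>) R \<and>
     R \<subseteq> (verts \<Gamma> \<times> verts \<Gamma>) \<union> (edges \<Gamma> \<times> edges \<Gamma>) \<and>
     (\<forall>e e'. (e, e') \<in> R \<and> e \<in> edges \<Gamma> \<longrightarrow>
        (src \<Gamma> e, src \<Gamma> e') \<in> R \<and> (tgt \<Gamma> e, tgt \<Gamma> e') \<in> R \<and>
        (rev_edge \<Gamma> e, rev_edge \<Gamma> e') \<in> R) \<and>
     (\<forall>e\<in>edges \<Gamma>. (e, rev_edge \<Gamma> e) \<notin> R)"

definition quot_graph :: "'a graph \<Rightarrow> ('a \<times> 'a) set \<Rightarrow> 'a set graph" where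
  "quot_graph \<Gamma> R =
     \<lparr> verts = verts \<Gamma> // R, edges = edges \<Gamma> // R,
       src = (\<lambda>C. R `` {src \<Gamma> (SOME e. e \<in> C)}),
       tgt = (\<lambda>C. R `` {tgt \<Gamma> (SOME e. e \<in> C)}),
       rev_edge = (\<lambda>C. R `` {rev_edge \<Gamma> (SOME e. e \<in> C)}) \<rparr>"

fun is_epath :: "'a graph \<Rightarrow> 'a \<Rightarrow> 'a list \<Rightarrow> 'a \<Rightarrow> bool" where
  "is_epath \<Gamma> v [] w \<longleftrightarrow> v = w"
| "is_epath \<Gamma> v (e # es) w \<longleftrightarrow> e \<in> edges \<Gamma> \<and> src \<Gamma> e = v \<and> is_epath \<Gamma> (tgt \<Gamma> e) es w"

definition graph_path_connected :: "'a graph \<Rightarrow> bool" where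
  "graph_path_connected \<Gamma> \<longleftrightarrow> (\<forall>v\<in>verts \<Gamma>. \<forall>w\<in>verts \<Gamma>. \<exists>es. is_epath \<Gamma> v es w)"

definition cofinite_graph :: "'a graph \<Rightarrow> ('a \<times> 'a) set set \<Rightarrow> bool" where
  "cofinite_graph \<Gamma> U \<longleftrightarrow> is_graph \<Gamma> \<and> hausdorff_uniformity (gcarrier \<Gamma>) U \<and>
     (\<forall>D\<in>U. \<exists>R. compatible \<Gamma> R \<and> cofinite_entourage (gcarrier \<Gamma>) U R \<and> R \<subseteq> D)"

definition cofinite_congruence :: "('g, 'm) monoid_scheme \<Rightarrow> ('g \<times> 'g) set set \<Rightarrow> ('g \<times> 'g) set \<Rightarrow> bool" where
  "cofinite_congruence G U R \<longleftrightarrow> cofinite_entourage (carrier G) U R \<and>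
     (\<forall>a b c d. (a, b) \<in> R \<and> (c, d) \<in> R \<longrightarrow> (a \<otimes>\<^bsub>G\<^esub> c, b \<otimes>\<^bsub>G\<^esub> d) \<in> R)"

definition cofinite_group :: "('g, 'm) monoid_scheme \<Rightarrow> ('g \<times> 'g) set set \<Rightarrow> bool" where
  "cofinite_group G U \<longleftrightarrow> group G \<and> hausdorff_uniformity (carrier G) U \<and>
     (\<forall>D\<in>U. \<exists>R. cofinite_congruence G U R \<and> R \<subseteq> D)"

definition cofinitely_connected :: "'a graph \<Rightarrow> ('a \<times> 'a) set set \<Rightarrow> bool" where
  "cofinitely_connected \<Gamma> U \<longleftrightarrow>
     (\<forall>R. compatible \<Gamma> R \<and> cofinite_entourage (gcarrier \<Gamma>) U R \<longrightarrow>
          graph_path_connected (quot_graph \<Gamma> R))"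

definition cayley_graph ::
  "('g, 'm) monoid_scheme \<Rightarrow> 'x graph \<Rightarrow> 'x \<Rightarrow> ('x \<Rightarrow> 'g) \<Rightarrow> ('g \<times> 'x) graph" where
  "cayley_graph G X star \<alpha> =
     \<lparr> verts = carrier G \<times> {star}, edges = carrier G \<times> edges X,
       src = (\<lambda>(g, e). (g, star)),
       tgt = (\<lambda>(g, e). (g \<otimes>\<^bsub>G\<^esub> \<alpha> e, star)),
       rev_edge = (\<lambda>(g, e). (g \<otimes>\<^bsub>G\<^esub> \<alpha> e, rev_edge X e)) \<rparr>"

definition cayley_unif ::
  "('g, 'm) monoid_scheme \<Rightarrow> ('g \<times> 'g) set set \<Rightarrow> 'x graph \<Rightarrow> ('x \<times> 'x) set set
     \<Rightarrow> (('g \<times> 'x) \<times> ('g \<times> 'x)) set set" where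
  "cayley_unif G UG X UX = prod_unif (carrier G) UG (gcarrier X) UX"

end

theory Submission
  imports Defs
begin

text \<open>Let \<open>H\<close> be the subgroup generated by \<open>\<alpha>(X)\<close>.  Edge paths in \<open>\<Gamma>\<close> from
  \<open>(g, *)\<close> reach exactly the vertices \<open>(g h, *)\<close> with \<open>h \<in> H\<close>.  If \<open>H\<close> is dense, then for
  every entourage \<open>R\<close> of \<open>\<Gamma>\<close> there is a cofinite congruence \<open>N\<close> with \<open>(g, *) R (g', *)\<close>
  whenever \<open>g N g'\<close>, and \<open>g' N g h\<close> for some \<open>h \<in> H\<close>, so \<open>\<Gamma>/R\<close> is connected.
  Conversely, for a cofinite congruence \<open>N\<close> choose, by uniform continuity, a compatible
  cofinite entourage \<open>S\<close> of \<open>X\<close> on which \<open>\<alpha>\<close> respects \<open>N\<close>; then \<open>N \<times> S\<close> is a compatible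
  cofinite entourage of \<open>\<Gamma>\<close>, and along any path in \<open>\<Gamma>/(N \<times> S)\<close> starting at the class of
  \<open>(1, *)\<close> every vertex class contains some \<open>(h, *)\<close> with \<open>h \<in> H\<close>.  Hence \<open>H\<close> meets every
  \<open>N\<close>-class.\<close>

lemma cayley_graph_simps [simp]:
  "verts (cayley_graph G X star \<alpha>) = carrier G \<times> {star}"
  "edges (cayley_graph G X star \<alpha>) = carrier G \<times> edges X"
  "src (cayley_graph G X star \<alpha>) (g, e) = (g, star)"
  "tgt (cayley_graph G X star \<alpha>) (g, e) = (g \<otimes>\<^bsub>G\<^esub> \<alpha> e, star)"
  "rev_edge (cayley_graph G X star \<alpha>) (g, e) = (g \<otimes>\<^bsub>G\<^esub> \<alpha> e, rev_edge X e)"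
  by (simp_all add: cayley_graph_def)

lemma quot_graph_simps [simp]:
  "verts (quot_graph \<Gamma> R) = verts \<Gamma> // R"
  "edges (quot_graph \<Gamma> R) = edges \<Gamma> // R"
  "src (quot_graph \<Gamma> R) C = R `` {src \<Gamma> (SOME e. e \<in> C)}"
  "tgt (quot_graph \<Gamma> R) C = R `` {tgt \<Gamma> (SOME e. e \<in> C)}"
  by (simp_all add: quot_graph_def)

lemma is_epath_append:
  "is_epath \<Gamma> u xs v \<Longrightarrow> is_epath \<Gamma> v ys w \<Longrightarrow> is_epath \<Gamma> u (xs @ ys) w"
  by (induction xs arbitrary: u) auto

lemma some_in_equiv_class:
  assumes "equiv A R" "C \<in> A // R"
  shows "(SOME x. x \<in> C) \<in> C"
  using assms by (metis in_quotient_imp_non_empty some_in_eq)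

lemma is_epath_quot_graph:
  assumes comp: "compatible \<Gamma> R" and "is_epath \<Gamma> v es w"
  shows "is_epath (quot_graph \<Gamma> R) (R `` {v}) (map (\<lambda>e. R `` {e}) es) (R `` {w})"
  using assms(2)
proof (induction es arbitrary: v)
  case Nil
  then show ?case by simp
next
  case (Cons e es)
  have eq: "equiv (gcarrier \<Gamma>) R" using comp by (simp add: compatible_def)
  have e: "e \<in> edges \<Gamma>" "src \<Gamma> e = v" "is_epath \<Gamma> (tgt \<Gamma> e) es w" using Cons.prems by auto
  have E_class: "R `` {e} \<in> edges \<Gamma> // R" using e(1) by (rule quotientI)
  define e' where "e' = (SOME e'. e' \<in> R `` {e})"
  have "(e, e') \<in> R"
    using some_in_equiv_class[OF eq, of "R `` {e}"] e(1) by (simp add: e'_def quotientI)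
  then have "(src \<Gamma> e, src \<Gamma> e') \<in> R" "(tgt \<Gamma> e, tgt \<Gamma> e') \<in> R"
    using comp e(1) by (simp_all add: compatible_def)
  then have "R `` {src \<Gamma> e'} = R `` {v}" "R `` {tgt \<Gamma> e'} = R `` {tgt \<Gamma> e}"
    using equiv_class_eq[OF eq] e(2) by auto
  then show ?case using Cons.IH[OF e(3)] E_class by (simp add: e'_def)
qed

definition prod_rel :: "('a \<times> 'a) set \<Rightarrow> ('b \<times> 'b) set \<Rightarrow> (('a \<times> 'b) \<times> ('a \<times> 'b)) set" where
  "prod_rel N S = {((g, a), (g', a')). (g, g') \<in> N \<and> (a, a') \<in> S}"

lemma prod_rel_iff [simp]: "((g, a), (g', a')) \<in> prod_rel N S \<longleftrightarrow> (g, g') \<in> N \<and> (a, a') \<in> S"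
  by (simp add: prod_rel_def)

lemma prod_rel_Image: "prod_rel N S `` {(g, a)} = N `` {g} \<times> S `` {a}"
  by auto

lemma equiv_prod_rel:
  assumes "equiv A N" "equiv B S"
  shows "equiv (A \<times> B) (prod_rel N S)"
proof (rule equivI)
  show "prod_rel N S \<subseteq> (A \<times> B) \<times> (A \<times> B)"
    using assms by (auto simp: prod_rel_def dest: equiv_type)
  show "refl_on (A \<times> B) (prod_rel N S)"
    using assms by (auto simp: prod_rel_def equiv_def refl_on_def)
  show "sym (prod_rel N S)"
    using assms by (auto simp: prod_rel_def equiv_def intro!: symI dest: symD)
  show "trans (prod_rel N S)"
    using assms by (auto simp: prod_rel_def equiv_def intro!: transI dest: transD)
qed

lemma finite_quotient_prod_rel:
  assumes "finite (A // N)" "finite (B // S)"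
  shows "finite ((A \<times> B) // prod_rel N S)"
proof -
  have "(A \<times> B) // prod_rel N S \<subseteq> (\<lambda>(P, Q). P \<times> Q) ` (A // N \<times> B // S)"
  proof
    fix C assume "C \<in> (A \<times> B) // prod_rel N S"
    then obtain g a where "g \<in> A" "a \<in> B" "C = N `` {g} \<times> S `` {a}"
      by (auto simp: prod_rel_Image elim!: quotientE)
    then show "C \<in> (\<lambda>(P, Q). P \<times> Q) ` (A // N \<times> B // S)"
      by (auto intro!: image_eqI[of _ _ "(N `` {g}, S `` {a})"] quotientI)
  qed
  then show ?thesis using assms by (meson finite_SigmaI finite_imageI finite_subset)
qed

lemma cofinite_entourage_prod_rel:
  assumes "cofinite_entourage S1 U1 N" "cofinite_entourage S2 U2 S"
  shows "cofinite_entourage (S1 \<times> S2) (prod_unif S1 U1 S2 U2) (prod_rel N S)"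
proof -
  have eq: "equiv S1 N" "equiv S2 S" and U: "N \<in> U1" "S \<in> U2"
    using assms by (auto simp: cofinite_entourage_def)
  have "prod_rel N S \<subseteq> (S1 \<times> S2) \<times> (S1 \<times> S2)"
    using equiv_type[OF equiv_prod_rel[OF eq]] .
  then have "prod_rel N S \<in> prod_unif S1 U1 S2 U2"
    using U unfolding prod_unif_def prod_rel_def by blast
  then show ?thesis
    using assms equiv_prod_rel[OF eq]
    by (simp add: cofinite_entourage_def finite_quotient_prod_rel)
qed

definition mult_compatible :: "('g, 'm) monoid_scheme \<Rightarrow> ('g \<times> 'g) set \<Rightarrow> bool" where
  "mult_compatible G N \<longleftrightarrow> (\<forall>a b c d. (a, b) \<in> N \<and> (c, d) \<in> N \<longrightarrow> (a \<otimes>\<^bsub>G\<^esub> c, b \<otimes>\<^bsub>G\<^esub> d) \<in> N)"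

lemma cofinite_congruence_iff:
  "cofinite_congruence G U N \<longleftrightarrow> cofinite_entourage (carrier G) U N \<and> mult_compatible G N"
  by (simp add: cofinite_congruence_def mult_compatible_def)

lemma unif_closure_cofinite_group:
  assumes "cofinite_group G U"
  shows "unif_closure (carrier G) U A =
    {x \<in> carrier G. \<forall>N. cofinite_congruence G U N \<longrightarrow> (\<exists>a\<in>A. (x, a) \<in> N)}"
  using assms
  by (fastforce simp: unif_closure_def cofinite_group_def cofinite_congruence_def cofinite_entourage_def)

locale cayley_data = group G for G :: "('g, 'm) monoid_scheme" (structure) +
  fixes X :: "'x graph" and star :: 'x and \<alpha> :: "'x \<Rightarrow> 'g"
  assumes graph_X: "is_graph X"
    and verts_X: "verts X = {star}"
    and \<alpha>_closed: "\<alpha> ` gcarrier X \<subseteq> carrier G"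
    and \<alpha>_star: "\<alpha> star = \<one>"
    and \<alpha>_rev_edge: "\<forall>e\<in>edges X. \<alpha> (rev_edge X e) = inv (\<alpha> e)"
begin

abbreviation \<Gamma> :: "('g \<times> 'x) graph" where
  "\<Gamma> \<equiv> cayley_graph G X star \<alpha>"

abbreviation H :: "'g set" where
  "H \<equiv> generate G (\<alpha> ` gcarrier X)"

lemma gcarrier_cayley: "gcarrier \<Gamma> = carrier G \<times> gcarrier X"
  using verts_X by auto

lemma \<alpha>_in_carrier: "x \<in> gcarrier X \<Longrightarrow> \<alpha> x \<in> carrier G"
  using \<alpha>_closed by auto

lemma epath_mult_generate:
  assumes "h \<in> H" "g \<in> carrier G"
  shows "\<exists>es. is_epath \<Gamma> (g, star) es (g \<otimes> h, star)"
  using assms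
proof (induction arbitrary: g rule: generate.induct)
  case one
  then show ?case by (auto intro!: exI[of _ "[]"])
next
  case (incl h)
  then obtain x where x: "x \<in> gcarrier X" "h = \<alpha> x" by auto
  show ?case
  proof (cases "x = star")
    case True
    then show ?thesis using incl x \<alpha>_star by (auto intro!: exI[of _ "[]"])
  next
    case False
    then have "x \<in> edges X" using x verts_X by auto
    then show ?thesis using incl x by (auto intro!: exI[of _ "[(g, x)]"])
  qed
next
  case (inv h)
  then obtain x where x: "x \<in> gcarrier X" "h = \<alpha> x" by auto
  show ?case
  proof (cases "x = star")
    case True
    then show ?thesis using inv x \<alpha>_star by (auto intro!: exI[of _ "[]"])
  next
    case False
    then have "x \<in> edges X" using x verts_X by auto
    moreover have "rev_edge X x \<in> edges X" using calculation graph_X by (simp add: is_graph_def)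
    ultimately show ?thesis
      using inv x \<alpha>_rev_edge by (auto intro!: exI[of _ "[(g, rev_edge X x)]"])
  qed
next
  case (eng h1 h2)
  have "h1 \<in> carrier G" "h2 \<in> carrier G"
    using eng(1,2) generate_incl[OF \<alpha>_closed] by auto
  moreover obtain es1 where "is_epath \<Gamma> (g, star) es1 (g \<otimes> h1, star)"
    using eng.IH(1) eng.prems by blast
  moreover obtain es2 where "is_epath \<Gamma> (g \<otimes> h1, star) es2 (g \<otimes> h1 \<otimes> h2, star)"
    using eng.IH(2) eng.prems calculation(1) by blast
  ultimately show ?case
    using eng.prems is_epath_append by (metis m_assoc)
qed

lemma compatible_cayley_prod_rel:
  assumes N: "equiv (carrier G) N" "mult_compatible G N"
    and S: "compatible X S" and \<alpha>_S: "\<And>p q. (p, q) \<in> S \<Longrightarrow> (\<alpha> p, \<alpha> q) \<in> N"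
  shows "compatible \<Gamma> (prod_rel N S)"
proof -
  have eqS: "equiv (gcarrier X) S" and S_graph: "S \<subseteq> verts X \<times> verts X \<union> edges X \<times> edges X"
    using S by (simp_all add: compatible_def)
  have star_S: "(star, star) \<in> S"
    using eqS verts_X by (auto simp: equiv_def refl_on_def)
  have structure_maps: "(src \<Gamma> e, src \<Gamma> e') \<in> prod_rel N S \<and> (tgt \<Gamma> e, tgt \<Gamma> e') \<in> prod_rel N S \<and>
      (rev_edge \<Gamma> e, rev_edge \<Gamma> e') \<in> prod_rel N S"
    if ee': "(e, e') \<in> prod_rel N S" "e \<in> edges \<Gamma>" for e e'
  proof -
    obtain g a g' a' where e: "e = (g, a)" "e' = (g', a')" "(g, g') \<in> N" "(a, a') \<in> S"
      "a \<in> edges X"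
      using ee' by (cases e, cases e') auto
    have "(g \<otimes> \<alpha> a, g' \<otimes> \<alpha> a') \<in> N"
      using N(2) e(3) \<alpha>_S[OF e(4)] by (simp add: mult_compatible_def)
    then show ?thesis
      using e star_S S by (simp add: compatible_def)
  qed
  have "(e, rev_edge \<Gamma> e) \<notin> prod_rel N S" if "e \<in> edges \<Gamma>" for e
    using S that by (cases e) (auto simp: compatible_def)
  moreover have "equiv (gcarrier \<Gamma>) (prod_rel N S)"
    unfolding gcarrier_cayley using equiv_prod_rel[OF N(1) eqS] .
  moreover have "prod_rel N S \<subseteq> verts \<Gamma> \<times> verts \<Gamma> \<union> edges \<Gamma> \<times> edges \<Gamma>"
    using equiv_type[OF N(1)] S_graph verts_X by (auto simp: prod_rel_def)
  ultimately show ?thesis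
    using structure_maps by (simp add: compatible_def)
qed

text \<open>The structure maps of the quotient act on a chosen representative \<open>(g, a)\<close> of an
  edge class.  If \<open>(h, star)\<close> lies in its source class then \<open>g N h\<close>, so the target class,
  that of \<open>(g \<otimes> \<alpha> a, star)\<close>, also contains \<open>(h \<otimes> \<alpha> a, star)\<close>.\<close>
lemma quot_epath_stays_in:
  assumes N: "equiv (carrier G) N" "mult_compatible G N" and S: "equiv (gcarrier X) S"
    and K_closed: "\<And>h a. h \<in> K \<Longrightarrow> a \<in> gcarrier X \<Longrightarrow> h \<otimes> \<alpha> a \<in> K"
    and "is_epath (quot_graph \<Gamma> (prod_rel N S)) C es C'" "(h, star) \<in> C" "h \<in> K"
  shows "\<exists>h'\<in>K. (h', star) \<in> C'"
  using assms(5-)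
proof (induction es arbitrary: C h)
  case Nil
  then show ?case by auto
next
  case (Cons E es)
  let ?R = "prod_rel N S"
  have eqR: "equiv (gcarrier \<Gamma>) ?R"
    unfolding gcarrier_cayley using equiv_prod_rel[OF N(1) S] .
  from Cons.prems have E: "E \<in> edges \<Gamma> // ?R" and src_E: "src (quot_graph \<Gamma> ?R) E = C"
    and rest: "is_epath (quot_graph \<Gamma> ?R) (tgt (quot_graph \<Gamma> ?R) E) es C'" by auto
  obtain g a where some_E: "(SOME e. e \<in> E) = (g, a)" by fastforce
  have "E \<in> gcarrier \<Gamma> // ?R"
    using E by (auto elim!: quotientE intro: quotientI)
  then have "(g, a) \<in> gcarrier \<Gamma>"
    using some_in_equiv_class[OF eqR] in_quotient_imp_subset[OF eqR] some_E by (metis subsetD)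
  then have a: "a \<in> gcarrier X" using verts_X by auto
  have "C = ?R `` {(g, star)}" using src_E some_E by simp
  then have "(g, h) \<in> N" using Cons.prems(2) by auto
  then have "(g \<otimes> \<alpha> a, h \<otimes> \<alpha> a) \<in> N"
    using N \<alpha>_in_carrier[OF a] by (auto simp: mult_compatible_def equiv_def refl_on_def)
  moreover have "(star, star) \<in> S" using S verts_X by (auto simp: equiv_def refl_on_def)
  ultimately have "(h \<otimes> \<alpha> a, star) \<in> tgt (quot_graph \<Gamma> ?R) E" using some_E by simp
  then show ?case using Cons.IH[OF rest] K_closed[OF Cons.prems(3) a] by blast
qed

lemma cofinitely_connected_if_dense:
  assumes cg: "cofinite_group G UG" and uX: "is_uniformity (gcarrier X) UX"
    and dense: "unif_closure (carrier G) UG H = carrier G"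
  shows "cofinitely_connected \<Gamma> (cayley_unif G UG X UX)"
  unfolding cofinitely_connected_def
proof (intro allI impI)
  fix R assume "compatible \<Gamma> R \<and> cofinite_entourage (gcarrier \<Gamma>) (cayley_unif G UG X UX) R"
  then have comp: "compatible \<Gamma> R" and eqR: "equiv (gcarrier \<Gamma>) R"
    and R_unif: "R \<in> cayley_unif G UG X UX"
    by (auto simp: cofinite_entourage_def)
  obtain D1 D2 where D1: "D1 \<in> UG" and D2: "D2 \<in> UX"
    and sub: "{((a, b), (a', b')). (a, a') \<in> D1 \<and> (b, b') \<in> D2} \<subseteq> R"
    using R_unif unfolding cayley_unif_def prod_unif_def by blast
  obtain N where N: "cofinite_congruence G UG N" "N \<subseteq> D1"
    using cg D1 unfolding cofinite_group_def by blast
  have eqN: "equiv (carrier G) N" and compN: "mult_compatible G N"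
    using N(1) by (auto simp: cofinite_congruence_iff cofinite_entourage_def)
  have "Id_on (gcarrier X) \<subseteq> D2"
    using uX D2 by (simp add: is_uniformity_def)
  then have "(star, star) \<in> D2"
    using verts_X by auto
  then have N_R: "((g, star), (g', star)) \<in> R" if "(g, g') \<in> N" for g g'
    using sub N(2) that by blast
  show "graph_path_connected (quot_graph \<Gamma> R)"
    unfolding graph_path_connected_def
  proof (intro ballI)
    fix v w assume "v \<in> verts (quot_graph \<Gamma> R)" "w \<in> verts (quot_graph \<Gamma> R)"
    then obtain g g' where g: "g \<in> carrier G" "v = R `` {(g, star)}"
      and g': "g' \<in> carrier G" "w = R `` {(g', star)}"
      by (auto elim!: quotientE)
    have "inv g \<otimes> g' \<in> unif_closure (carrier G) UG H" using dense g g' by simp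
    then obtain h where h: "h \<in> H" "(inv g \<otimes> g', h) \<in> N"
      using unif_closure_cofinite_group[OF cg] N(1) by blast
    then have "(g \<otimes> (inv g \<otimes> g'), g \<otimes> h) \<in> N"
      using compN eqN g by (auto simp: mult_compatible_def equiv_def refl_on_def)
    then have "(g', g \<otimes> h) \<in> N" using g g' by (simp add: m_assoc[symmetric])
    then have "R `` {(g \<otimes> h, star)} = w" using equiv_class_eq[OF eqR N_R] g' by simp
    moreover obtain es where "is_epath \<Gamma> (g, star) es (g \<otimes> h, star)"
      using epath_mult_generate h g by blast
    ultimately show "\<exists>es. is_epath (quot_graph \<Gamma> R) v es w"
      using is_epath_quot_graph[OF comp] g by blast
  qed
qed

lemma dense_if_cofinitely_connected:
  assumes cg: "cofinite_group G UG" and cX: "cofinite_graph X UX"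
    and cont: "unif_continuous UX UG \<alpha>"
    and conn: "cofinitely_connected \<Gamma> (cayley_unif G UG X UX)"
  shows "unif_closure (carrier G) UG H = carrier G"
proof -
  have "\<exists>h\<in>H. (x, h) \<in> N" if x: "x \<in> carrier G" and N: "cofinite_congruence G UG N" for x N
  proof -
    have N_ent: "cofinite_entourage (carrier G) UG N" and compN: "mult_compatible G N"
      using N by (simp_all add: cofinite_congruence_iff)
    then have eqN: "equiv (carrier G) N" and "N \<in> UG" by (auto simp: cofinite_entourage_def)
    then obtain D where D: "D \<in> UX" "\<And>p q. (p, q) \<in> D \<Longrightarrow> (\<alpha> p, \<alpha> q) \<in> N"
      using cont unfolding unif_continuous_def by fast
    obtain S where S: "compatible X S" "cofinite_entourage (gcarrier X) UX S" "S \<subseteq> D"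
      using cX D(1) unfolding cofinite_graph_def by blast
    have eqS: "equiv (gcarrier X) S" using S(1) by (simp add: compatible_def)
    let ?R = "prod_rel N S"
    have "compatible \<Gamma> ?R" using compatible_cayley_prod_rel[OF eqN compN S(1)] D(2) S(3) by blast
    moreover have "cofinite_entourage (gcarrier \<Gamma>) (cayley_unif G UG X UX) ?R"
      unfolding gcarrier_cayley cayley_unif_def using cofinite_entourage_prod_rel[OF N_ent S(2)] .
    ultimately have "graph_path_connected (quot_graph \<Gamma> ?R)"
      using conn by (simp add: cofinitely_connected_def)
    moreover have "?R `` {(\<one>, star)} \<in> verts (quot_graph \<Gamma> ?R)" "?R `` {(x, star)} \<in> verts (quot_graph \<Gamma> ?R)"
      using x by (auto intro: quotientI)
    ultimately obtain es where es: "is_epath (quot_graph \<Gamma> ?R) (?R `` {(\<one>, star)}) es (?R `` {(x, star)})"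
      unfolding graph_path_connected_def by blast
    have "(\<one>, star) \<in> ?R `` {(\<one>, star)}"
      using equiv_class_self[OF equiv_prod_rel[OF eqN eqS], of "(\<one>, star)"] verts_X by simp
    moreover have H_closed: "h \<otimes> \<alpha> a \<in> H" if "h \<in> H" "a \<in> gcarrier X" for h a
      using that by (auto intro: generate.eng generate.incl)
    ultimately obtain h where "h \<in> H" "(h, star) \<in> ?R `` {(x, star)}"
      using quot_epath_stays_in[OF eqN compN eqS H_closed es _ generate.one] by blast
    then show ?thesis by auto
  qed
  then show ?thesis
    unfolding unif_closure_cofinite_group[OF cg] by blast
qed

end

theorem mainTheorem3:
  fixes G :: "('g, 'm) monoid_scheme" and UG :: "('g \<times> 'g) set set"
    and X :: "'x graph" and UX :: "('x \<times> 'x) set set"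
    and star :: 'x and \<alpha> :: "'x \<Rightarrow> 'g"
  assumes "cofinite_group G UG"
    and "cofinite_graph X UX"
    and "verts X = {star}"
    and "\<alpha> ` gcarrier X \<subseteq> carrier G"
    and "unif_continuous UX UG \<alpha>"
    and "\<alpha> star = \<one>\<^bsub>G\<^esub>"
    and "\<forall>e\<in>edges X. \<alpha> (rev_edge X e) = inv\<^bsub>G\<^esub> (\<alpha> e)"
  shows "unif_closure (carrier G) UG (generate G (\<alpha> ` gcarrier X)) = carrier G \<longleftrightarrow>
         cofinitely_connected (cayley_graph G X star \<alpha>) (cayley_unif G UG X UX)"
proof -
  have "group G" and "is_graph X" and "is_uniformity (gcarrier X) UX"
    using assms(1,2) by (simp_all add: cofinite_group_def cofinite_graph_def hausdorff_uniformity_def)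
  then interpret cayley_data G X star \<alpha>
    using assms(3-) by (simp add: cayley_data_def cayley_data_axioms_def)
  show ?thesis
    using assms(1,2,5) \<open>is_uniformity (gcarrier X) UX\<close>
      cofinitely_connected_if_dense dense_if_cofinitely_connected by blast
qed

end
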